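(* Let $k$ be a positive integer and let $\theta$ be a nonnegative real number. Then there exists an infinite word $\mathbf{w}$ such that $\mathcal{A}_k(\mathbf{w})=\theta$, where $\mathcal{A}_k$ denotes the $k$-abelian critical exponent. Moreover, $\mathbf{w}$ can be taken over an alphabet of at most three letters.
   Context: For finite words $u,x$, $|u|_x$ denotes the number of occurrences of $x$ as a factor of $u$. Two finite words $u,v$ are $k$-abelian equivalent, written $u\sim_k v$, if $|u|_x=|v|_x$ for every nonempty word $x$ of length at most $k$. A $k$-abelian power of exponent $e$ (a positive integer) and period $m$ is a nonempty word $u_0u_1\cdots u_{e-1}$ with $|u_0|=m$ and $u_0\sim_k u_1\sim_k\cdots\sim_k u_{e-1}$. For an infinite word $\mathbf{w}$ and positive integer $m$, let $A_{k,\mathbf{w}}(m)$ be the supremum of the exponents of $k$-abelian powers of period $m$ occurring in $\mathbf{w}$. The $k$-abelian critical exponent is $\mathcal{A}_k(\mathbf{w})=\limsup_{m\to\infty} A_{k,\mathbf{w}}(m)/m$. *)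

theory Defs
  imports "HOL-Analysis.Analysis"
begin

definition occ :: "'a list \<Rightarrow> 'a list \<Rightarrow> nat" where
  "occ u x = card {i. i + length x \<le> length u \<and> take (length x) (drop i u) = x}"

definition kab_equiv :: "nat \<Rightarrow> 'a list \<Rightarrow> 'a list \<Rightarrow> bool" where
  "kab_equiv k u v \<longleftrightarrow> (\<forall>x. x \<noteq> [] \<and> length x \<le> k \<longrightarrow> occ u x = occ v x)"

definition factor :: "(nat \<Rightarrow> 'a) \<Rightarrow> nat \<Rightarrow> nat \<Rightarrow> 'a list" where
  "factor w p n = map w [p..<p+n]"

definition kab_power_at :: "nat \<Rightarrow> (nat \<Rightarrow> 'a) \<Rightarrow> nat \<Rightarrow> nat \<Rightarrow> nat \<Rightarrow> bool" where
  "kab_power_at k w p m e \<longleftrightarrow> 0 < m \<and> 0 < e \<and>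
     (\<forall>i. i + 1 < e \<longrightarrow> kab_equiv k (factor w (p + i*m) m) (factor w (p + (i+1)*m) m))"

definition kab_A :: "nat \<Rightarrow> (nat \<Rightarrow> 'a) \<Rightarrow> nat \<Rightarrow> ereal" where
  "kab_A k w m = Sup {ereal (real e) | e. \<exists>p. kab_power_at k w p m e}"

definition kab_crit_exp :: "nat \<Rightarrow> (nat \<Rightarrow> 'a) \<Rightarrow> ereal" where
  "kab_crit_exp k w = limsup (\<lambda>m. kab_A k w m / ereal (real m))"

end

theory Submission
  imports Defs "HOL-Number_Theory.Cong" "HOL-Real_Asymp.Real_Asymp"
begin

text \<open>The word is a concatenation of zones.  Zone \<open>j\<close> is built from a prime \<open>L\<close> and a pair
  \<open>(p\<^sub>1, p\<^sub>2)\<close>: it interleaves the mechanical words of slopes \<open>p\<^sub>1/L\<close> and \<open>p\<^sub>2/L\<close>, which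
  gives a word of period \<open>2L\<close>, and repeats that period about \<open>2\<theta>L\<close> times.  So zone \<open>j\<close> is a
  power of period \<open>2L\<close> and exponent at least \<open>2\<theta>L\<close>, and the lim sup is at least \<open>\<theta>\<close>.

  Conversely, a \<open>k\<close>-abelian power is an abelian power, so all its blocks contain the same
  number of letters 1 and of letters 2.  Blocks inside one zone make the two mechanical words
  advance by constant amounts along an arithmetic progression of difference \<open>m\<close>.  A
  Diophantine condition on \<open>(p\<^sub>1, p\<^sub>2)\<close> (satisfied by most pairs modulo the prime \<open>L\<close>, by
  counting) bounds the length of such a progression by \<open>\<theta>m + O(m\<^bsup>3/4\<^esup>)\<close>.  Blocks in two
  different zones cannot occur, because the frequencies of the letter 1 in consecutive zones lie
  in disjoint bands.  Finally, only \<open>O(\<surd>m)\<close> blocks straddle a zone boundary, because zone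
  lengths grow fast.  Hence powers of period \<open>m\<close> have exponent \<open>\<theta>m + o(m)\<close>.\<close>


section \<open>Distance to the nearest multiple\<close>

definition dist_to_mult :: "nat \<Rightarrow> nat \<Rightarrow> nat" where
  "dist_to_mult d L = min (d mod L) (L - d mod L)"

lemma dist_to_mult_le_abs:
  assumes "0 < L"
  shows "int (dist_to_mult d L) \<le> \<bar>int d - c * int L\<bar>"
proof -
  have d: "int d = int L * int (d div L) + int (d mod L)"
    by (simp flip: of_nat_mult of_nat_add)
  show ?thesis
  proof (cases "c \<le> int (d div L)")
    case True
    then have "int L * c \<le> int L * int (d div L)" by (simp add: mult_left_mono)
    then show ?thesis using d unfolding dist_to_mult_def by (simp add: algebra_simps)
  next
    case False
    then have "int L * (int (d div L) + 1) \<le> int L * c" by (simp add: mult_left_mono)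
    then show ?thesis using d assms unfolding dist_to_mult_def by (simp add: algebra_simps of_nat_diff)
  qed
qed

lemma dist_to_mult_mod [simp]: "dist_to_mult (d mod L) L = dist_to_mult d L"
  unfolding dist_to_mult_def by simp

text \<open>If the quotients by \<open>L\<close> of \<open>x\<close> and \<open>x + J d\<close> differ by a multiple \<open>J c\<close> of \<open>J\<close>, then
  \<open>J (d - c L)\<close> is a difference of two remainders.\<close>
lemma dist_to_mult_bound_of_div_eq:
  assumes L: "0 < L" and h: "(x + J * d) div L = x div L + J * c"
  shows "J * dist_to_mult d L < L"
proof -
  have x: "int x = int L * int (x div L) + int (x mod L)"
    by (simp flip: of_nat_mult of_nat_add)
  have "x + J * d = L * (x div L + J * c) + (x + J * d) mod L"
    by (metis h mult_div_mod_eq)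
  then have xJ: "int x + int J * int d = int L * (int (x div L) + int J * int c) + int ((x + J * d) mod L)"
    by (metis of_nat_add of_nat_mult)
  have "int J * (int d - int c * int L) = int ((x + J * d) mod L) - int (x mod L)"
    using x xJ by (simp add: algebra_simps)
  moreover have "x mod L < L" "(x + J * d) mod L < L" using L by auto
  ultimately have "\<bar>int J * (int d - int c * int L)\<bar> < int L" by arith
  then have "int J * \<bar>int d - int c * int L\<bar> < int L" by (simp add: abs_mult)
  moreover have "int J * int (dist_to_mult d L) \<le> int J * \<bar>int d - int c * int L\<bar>"
    using dist_to_mult_le_abs[OF L, of d "int c"] by (simp add: mult_left_mono)
  ultimately show ?thesis by (metis of_nat_less_iff of_nat_mult order.strict_trans1)
qed

lemma finite_nat_less_real: "finite {r::nat. real r < X}"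
  by (rule finite_subset[of _ "{..< nat \<lceil>X\<rceil>}"]) (auto simp: less_ceiling_iff zless_nat_eq_int_zless)

lemma card_nat_less_real: "real (card {r::nat. real r < X}) \<le> max 0 X + 1"
proof -
  have "{r::nat. real r < X} \<subseteq> {..< nat \<lceil>X\<rceil>}"
    by (auto simp: less_ceiling_iff zless_nat_eq_int_zless)
  then have "card {r::nat. real r < X} \<le> nat \<lceil>X\<rceil>"
    by (metis card_lessThan card_mono finite_lessThan)
  moreover have "real (nat \<lceil>X\<rceil>) \<le> max 0 X + 1" by linarith
  ultimately show ?thesis by linarith
qed

lemma card_dist_to_mult_less:
  assumes L: "0 < L"
  shows "real (card {r. r < L \<and> real (dist_to_mult r L) < X}) \<le> 2 * max 0 X + 2"
proof -
  define S where "S = {r::nat. real r < X}"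
  have fin: "finite S" unfolding S_def by (rule finite_nat_less_real)
  have "{r. r < L \<and> real (dist_to_mult r L) < X} \<subseteq> S \<union> (\<lambda>s. L - s) ` S"
  proof
    fix r assume "r \<in> {r. r < L \<and> real (dist_to_mult r L) < X}"
    then have r: "r < L" "real (min r (L - r)) < X" by (auto simp: dist_to_mult_def)
    show "r \<in> S \<union> (\<lambda>s. L - s) ` S"
    proof (cases "r \<le> L - r")
      case True
      then show ?thesis using r by (simp add: S_def min_def)
    next
      case False
      then have "L - r \<in> S" using r by (simp add: S_def min_def)
      moreover have "r = L - (L - r)" using r by simp
      ultimately show ?thesis by blast
    qed
  qed
  then have "card {r. r < L \<and> real (dist_to_mult r L) < X} \<le> card S + card ((\<lambda>s. L - s) ` S)"
    using fin by (meson card_Un_le card_mono finite_Un finite_imageI order_trans)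
  also have "\<dots> \<le> 2 * card S" using card_image_le[OF fin] by simp
  finally show ?thesis using card_nat_less_real[of X] unfolding S_def by linarith
qed

lemma card_sq_less_le: "real (card {j::nat. j * j < n}) \<le> sqrt (real n) + 1"
proof -
  have "{j::nat. j * j < n} \<subseteq> {r. real r < sqrt (real n)}"
  proof
    fix j assume "j \<in> {j. j * j < n}"
    then have "real j * real j < real n" by (metis of_nat_less_iff of_nat_mult mem_Collect_eq)
    then have "sqrt (real j * real j) < sqrt (real n)" by (rule real_sqrt_less_mono)
    then show "j \<in> {r. real r < sqrt (real n)}" by simp
  qed
  then have "card {j::nat. j * j < n} \<le> card {r::nat. real r < sqrt (real n)}"
    by (rule card_mono[OF finite_nat_less_real])
  then show ?thesis using card_nat_less_real[of "sqrt (real n)"] by simp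
qed


section \<open>Interleaved mechanical words\<close>

definition ones_prefix :: "nat \<Rightarrow> nat \<Rightarrow> nat \<Rightarrow> nat" where
  "ones_prefix L p n = ((n + 1) div 2 * p) div L"

definition twos_prefix :: "nat \<Rightarrow> nat \<Rightarrow> nat \<Rightarrow> nat" where
  "twos_prefix L p n = (n div 2 * p) div L"

text \<open>Even positions carry the mechanical word of slope \<open>p\<^sub>1/L\<close> over \<open>{0,1}\<close>, odd positions
  the one of slope \<open>p\<^sub>2/L\<close> over \<open>{0,2}\<close>.\<close>
definition twin_word :: "nat \<Rightarrow> nat \<Rightarrow> nat \<Rightarrow> nat \<Rightarrow> nat" where
  "twin_word L p\<^sub>1 p\<^sub>2 n = (if even n
     then (if ((n div 2 + 1) * p\<^sub>1) div L = (n div 2 * p\<^sub>1) div L then 0 else 1)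
     else (if ((n div 2 + 1) * p\<^sub>2) div L = (n div 2 * p\<^sub>2) div L then 0 else 2))"

lemma twin_word_range: "twin_word L p\<^sub>1 p\<^sub>2 n \<in> {0, 1, 2}"
  by (simp add: twin_word_def)

lemma card_less_Suc_eq:
  "card {i. i < Suc n \<and> P i} = card {i. i < n \<and> P i} + (if P n then 1 else 0)"
proof -
  have "{i. i < Suc n \<and> P i} = {i. i < n \<and> P i} \<union> (if P n then {n} else {})"
    by (auto simp: less_Suc_eq)
  then show ?thesis by auto
qed

lemma Suc_mult_div_le:
  fixes p L i :: nat
  assumes "p \<le> L" "0 < L"
  shows "(Suc i * p) div L \<le> (i * p) div L + 1"
proof -
  have "(Suc i * p) div L \<le> (i * p + L) div L"
    by (rule div_le_mono) (use assms in simp)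
  also have "\<dots> = (i * p) div L + 1" using assms by simp
  finally show ?thesis .
qed

lemma card_twin_word_ones:
  assumes "p\<^sub>1 \<le> L" "0 < L"
  shows "card {i. i < n \<and> twin_word L p\<^sub>1 p\<^sub>2 i = 1} = ones_prefix L p\<^sub>1 n"
proof (induction n)
  case (Suc n)
  show ?case
  proof (cases "even n")
    case True
    then have "(Suc n + 1) div 2 = Suc (n div 2)" "(n + 1) div 2 = n div 2" by auto
    moreover have "(n div 2 * p\<^sub>1) div L \<le> (Suc (n div 2) * p\<^sub>1) div L" by (rule div_le_mono) simp
    ultimately show ?thesis
      using Suc True Suc_mult_div_le[OF assms, of "n div 2"]
      by (auto simp: card_less_Suc_eq ones_prefix_def twin_word_def)
  next
    case False
    then have "(Suc n + 1) div 2 = (n + 1) div 2" by presburger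
    then show ?thesis using Suc False by (auto simp: card_less_Suc_eq ones_prefix_def twin_word_def)
  qed
qed (simp add: ones_prefix_def)

lemma card_twin_word_twos:
  assumes "p\<^sub>2 \<le> L" "0 < L"
  shows "card {i. i < n \<and> twin_word L p\<^sub>1 p\<^sub>2 i = 2} = twos_prefix L p\<^sub>2 n"
proof (induction n)
  case (Suc n)
  show ?case
  proof (cases "even n")
    case False
    then have "Suc n div 2 = Suc (n div 2)" by presburger
    moreover have "(n div 2 * p\<^sub>2) div L \<le> (Suc (n div 2) * p\<^sub>2) div L" by (rule div_le_mono) simp
    ultimately show ?thesis
      using Suc False Suc_mult_div_le[OF assms, of "n div 2"]
      by (auto simp: card_less_Suc_eq twos_prefix_def twin_word_def)
  next
    case True
    then have "Suc n div 2 = n div 2" by presburger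
    then show ?thesis using Suc True by (auto simp: card_less_Suc_eq twos_prefix_def twin_word_def)
  qed
qed (simp add: twos_prefix_def)

lemma add_mult_div_period:
  fixes a L p :: nat
  assumes "0 < L"
  shows "((a + L) * p) div L = (a * p) div L + p"
proof -
  have "(a + L) * p = a * p + p * L" by (simp add: algebra_simps)
  then show ?thesis using assms by simp
qed

lemma twin_word_periodic:
  assumes "0 < L"
  shows "twin_word L p\<^sub>1 p\<^sub>2 (n + 2 * L) = twin_word L p\<^sub>1 p\<^sub>2 n"
proof -
  have "(n + 2 * L) div 2 = n div 2 + L" "even (n + 2 * L) = even n" by simp_all
  moreover have "((n div 2 + L + 1) * p) div L = ((n div 2 + 1) * p) div L + p" for p
    using add_mult_div_period[OF assms, of "n div 2 + 1" p] by (simp add: ac_simps)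
  ultimately show ?thesis unfolding twin_word_def by (simp only: add_mult_div_period[OF assms]) simp
qed

lemma ones_prefix_add_period:
  assumes "0 < L"
  shows "ones_prefix L p (q + 2 * L) = ones_prefix L p q + p"
proof -
  have "(q + 2 * L + 1) div 2 = (q + 1) div 2 + L" by simp
  then show ?thesis unfolding ones_prefix_def by (simp only: add_mult_div_period[OF assms])
qed


section \<open>Abelian powers\<close>

definition count_in :: "(nat \<Rightarrow> 'a) \<Rightarrow> 'a \<Rightarrow> nat \<Rightarrow> nat \<Rightarrow> nat" where
  "count_in w a x y = card {i. x \<le> i \<and> i < y \<and> w i = a}"

definition abelian_power_at :: "(nat \<Rightarrow> 'a) \<Rightarrow> nat \<Rightarrow> nat \<Rightarrow> nat \<Rightarrow> bool" where
  "abelian_power_at w p m e \<longleftrightarrow>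
     (\<forall>i<e. \<forall>a. count_in w a (p + i * m) (p + i * m + m) = count_in w a p (p + m))"

lemma card_interval_add_card_prefix:
  fixes x y :: nat
  assumes "x \<le> y"
  shows "card {i. x \<le> i \<and> i < y \<and> P i} + card {i. i < x \<and> P i} = card {i. i < y \<and> P i}"
proof -
  have "{i. i < y \<and> P i} = {i. x \<le> i \<and> i < y \<and> P i} \<union> {i. i < x \<and> P i}" using assms by auto
  moreover have "finite {i. x \<le> i \<and> i < y \<and> P i}" "finite {i. i < x \<and> P i}" by auto
  ultimately show ?thesis by (simp add: card_Un_disjoint disjoint_iff)
qed

lemma card_interval_shift:
  fixes x y S :: nat
  assumes "S \<le> x"
  shows "card {i. x \<le> i \<and> i < y \<and> P i} = card {i. x - S \<le> i \<and> i < y - S \<and> P (i + S)}"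
proof -
  have "{i. x \<le> i \<and> i < y \<and> P i} = (\<lambda>i. i + S) ` {i. x - S \<le> i \<and> i < y - S \<and> P (i + S)}"
  proof (intro equalityI subsetI)
    fix i assume i: "i \<in> {i. x \<le> i \<and> i < y \<and> P i}"
    then have "i = (i - S) + S" "i - S \<in> {i. x - S \<le> i \<and> i < y - S \<and> P (i + S)}"
      using assms by auto
    then show "i \<in> (\<lambda>i. i + S) ` {i. x - S \<le> i \<and> i < y - S \<and> P (i + S)}" by blast
  qed (use assms in auto)
  then show ?thesis by (simp add: card_image inj_on_def)
qed

lemma occ_factor_singleton: "occ (factor w p m) [a] = count_in w a p (p + m)"
proof -
  have "{i. i + length [a] \<le> length (factor w p m) \<and> take (length [a]) (drop i (factor w p m)) = [a]}
      = {i. i < m \<and> w (p + i) = a}"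
  proof (rule Collect_cong)
    fix i
    show "(i + length [a] \<le> length (factor w p m) \<and> take (length [a]) (drop i (factor w p m)) = [a])
        = (i < m \<and> w (p + i) = a)"
    proof (cases "i < m")
      case True
      then have "drop i (factor w p m) = w (p + i) # drop (Suc i) (factor w p m)"
        unfolding factor_def by (simp add: Cons_nth_drop_Suc[symmetric])
      then show ?thesis using True by (simp add: factor_def)
    qed (simp add: factor_def)
  qed
  moreover have "card {i. i < m \<and> w (p + i) = a} = count_in w a p (p + m)"
    unfolding count_in_def using card_interval_shift[of p p "p + m" "\<lambda>i. w i = a"] by (simp add: add.commute)
  ultimately show ?thesis unfolding occ_def by simp
qed

lemma kab_power_at_imp_abelian_power_at:
  assumes k: "0 < k" and pw: "kab_power_at k w p m e"
  shows "abelian_power_at w p m e"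
  unfolding abelian_power_at_def
proof (intro allI impI)
  fix i a assume "i < e"
  then show "count_in w a (p + i * m) (p + i * m + m) = count_in w a p (p + m)"
  proof (induction i)
    case (Suc i)
    then have "kab_equiv k (factor w (p + i * m) m) (factor w (p + (i + 1) * m) m)"
      using pw unfolding kab_power_at_def by simp
    then have "occ (factor w (p + i * m) m) [a] = occ (factor w (p + (i + 1) * m) m) [a]"
      unfolding kab_equiv_def using k by auto
    then show ?case using Suc by (simp add: occ_factor_singleton algebra_simps)
  qed simp
qed

lemma kab_power_at_if_periodic:
  assumes "0 < P" "0 < e" and per: "\<And>n. p \<le> n \<Longrightarrow> n + P < p + e * P \<Longrightarrow> w (n + P) = w n"
  shows "kab_power_at k w p P e"
  unfolding kab_power_at_def
proof (intro conjI allI impI assms(1,2))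
  fix i assume i: "i + 1 < e"
  have "factor w (p + i * P) P = factor w (p + (i + 1) * P) P"
  proof (rule nth_equalityI)
    fix r assume "r < length (factor w (p + i * P) P)"
    then have "r < P" by (simp add: factor_def)
    moreover have "(i + 2) * P \<le> e * P" using i by (intro mult_le_mono1) simp
    ultimately have "w (p + i * P + r + P) = w (p + i * P + r)" by (intro per) simp_all
    then show "factor w (p + i * P) P ! r = factor w (p + (i + 1) * P) P ! r"
      using \<open>r < P\<close> by (simp add: factor_def algebra_simps)
  qed (simp add: factor_def)
  then show "kab_equiv k (factor w (p + i * P) P) (factor w (p + (i + 1) * P) P)"
    unfolding kab_equiv_def by simp
qed

lemma kab_A_ge:
  assumes "kab_power_at k w p m e"
  shows "ereal (real e) \<le> kab_A k w m"
  unfolding kab_A_def by (rule Sup_upper) (use assms in blast)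

lemma kab_A_le:
  assumes "\<And>p e. kab_power_at k w p m e \<Longrightarrow> real e \<le> B"
  shows "kab_A k w m \<le> ereal B"
  unfolding kab_A_def by (rule Sup_least) (use assms in auto)


lemma limsup_eq_ereal_if_bounds:
  fixes X :: "nat \<Rightarrow> ereal" and B :: "nat \<Rightarrow> real"
  assumes up: "eventually (\<lambda>m. X m \<le> ereal (B m)) sequentially" and B: "B \<longlonglongrightarrow> c"
    and low: "\<And>n. \<exists>m\<ge>n. ereal c \<le> X m"
  shows "limsup X = ereal c"
proof (rule antisym)
  have "limsup X \<le> limsup (\<lambda>m. ereal (B m))" by (rule Limsup_mono[OF up])
  also have "\<dots> = ereal c" by (rule lim_imp_Limsup) (simp_all add: B)
  finally show "limsup X \<le> ereal c" .
  show "ereal c \<le> limsup X" unfolding limsup_INF_SUP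
  proof (rule INF_greatest)
    fix n
    obtain m where "n \<le> m" "ereal c \<le> X m" using low by blast
    then show "ereal c \<le> (SUP m\<in>{n..}. X m)" by (meson SUP_upper atLeast_iff order_trans)
  qed
qed

section \<open>Good pairs of rates\<close>

lemma powr_three_quarters_sq: "(real t powr (3/4))\<^sup>2 = real t * sqrt (real t)"
proof (cases "t = 0")
  case False
  then have "(real t powr (3/4))\<^sup>2 = real t powr (1 + 1/2)" by (simp add: powr_power)
  also have "\<dots> = real t powr 1 * real t powr (1/2)" by (rule powr_add)
  also have "\<dots> = real t * sqrt (real t)" by (simp add: powr_half_sqrt)
  finally show ?thesis .
qed simp

text \<open>Since \<open>\<Sum> t\<^bsup>-3/2\<^esup>\<close> converges, most pairs of residues modulo a prime have this
  property.\<close>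
definition good_pair :: "nat \<Rightarrow> nat \<Rightarrow> nat \<Rightarrow> bool" where
  "good_pair L p\<^sub>1 p\<^sub>2 \<longleftrightarrow> (\<forall>t. 0 < t \<and> t < L \<longrightarrow>
      real L \<le> 40 * real (dist_to_mult (t * p\<^sub>1) L) * real t powr (3/4) \<or>
      real L \<le> 40 * real (dist_to_mult (t * p\<^sub>2) L) * real t powr (3/4))"

lemma good_pair_progression_bound:
  assumes L: "0 < L" and good: "good_pair L p\<^sub>1 p\<^sub>2" and m: "0 < m" "m < 2 * L" "m \<noteq> L"
    and J: "J * dist_to_mult (m * p\<^sub>1) L < L" "J * dist_to_mult (m * p\<^sub>2) L < L"
  shows "real J < 40 * real m powr (3/4)"
proof -
  define t where "t = m mod L"
  have "0 < t"
  proof (rule ccontr)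
    assume "\<not> 0 < t"
    then obtain k where k: "m = L * k" unfolding t_def by auto
    with m have "k \<noteq> 0" "k \<noteq> 1" by auto
    then have "L * 2 \<le> L * k" by simp
    with k m show False by linarith
  qed
  moreover have "t < L" "t \<le> m" unfolding t_def using L by simp_all
  moreover have "dist_to_mult (m * p) L = dist_to_mult (t * p) L" for p
    unfolding t_def by (metis dist_to_mult_mod mod_mult_left_eq)
  ultimately have "real L \<le> 40 * real (dist_to_mult (m * p\<^sub>1) L) * real t powr (3/4) \<or>
      real L \<le> 40 * real (dist_to_mult (m * p\<^sub>2) L) * real t powr (3/4)"
    using good unfolding good_pair_def by simp
  then obtain D where D: "real L \<le> 40 * real D * real t powr (3/4)" "J * D < L"
    using J by blast
  then have "0 < D" using L by (cases "D = 0") auto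
  have "real J * real D < 40 * real D * real t powr (3/4)"
    using D by (metis of_nat_less_iff of_nat_mult order_less_le_trans)
  then have "real J < 40 * real t powr (3/4)"
    using \<open>0 < D\<close> by (simp add: mult.commute mult.left_commute)
  also have "\<dots> \<le> 40 * real m powr (3/4)"
    using \<open>t \<le> m\<close> by (simp add: powr_mono2)
  finally show ?thesis .
qed

lemma card_mult_mod_preimage:
  fixes t L :: nat
  assumes t: "coprime t L"
  shows "card {p. p < L \<and> Q ((t * p) mod L)} = card {r. r < L \<and> Q r}"
proof -
  define f where "f p = (t * p) mod L" for p
  have inj: "inj_on f {..<L}"
  proof
    fix x y assume "x \<in> {..<L}" "y \<in> {..<L}" "f x = f y"
    then have "[t * x = t * y] (mod L)" by (simp add: f_def cong_def)
    then have "[x = y] (mod L)" using t by (simp add: cong_mult_lcancel_nat)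
    then show "x = y" using \<open>x \<in> {..<L}\<close> \<open>y \<in> {..<L}\<close> by (simp add: cong_less_modulus_unique_nat)
  qed
  have "f ` {..<L} \<subseteq> {..<L}" unfolding f_def by (cases "L = 0") auto
  then have surj: "f ` {..<L} = {..<L}" using inj by (intro endo_inj_surj) auto
  have "f ` {p. p < L \<and> Q (f p)} = {r. r < L \<and> Q r}"
  proof (intro equalityI subsetI)
    fix r assume "r \<in> f ` {p. p < L \<and> Q (f p)}"
    then obtain p where "p < L" "Q (f p)" "r = f p" by blast
    moreover have "f p < L" using \<open>p < L\<close> surj by blast
    ultimately show "r \<in> {r. r < L \<and> Q r}" by simp
  next
    fix r assume r: "r \<in> {r. r < L \<and> Q r}"
    then have "r \<in> f ` {..<L}" using surj by simp
    then obtain p where "p < L" "r = f p" by auto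
    then show "r \<in> f ` {p. p < L \<and> Q (f p)}" using r by blast
  qed
  moreover have "inj_on f {p. p < L \<and> Q (f p)}" by (rule inj_on_subset[OF inj]) auto
  ultimately have "card {p. p < L \<and> Q (f p)} = card {r. r < L \<and> Q r}" by (metis card_image)
  then show ?thesis by (simp add: f_def)
qed

definition close_rates :: "nat \<Rightarrow> nat \<Rightarrow> nat set" where
  "close_rates L t = {p. p < L \<and> 40 * real (dist_to_mult (t * p) L) * real t powr (3/4) < real L}"

lemma card_close_rates_sq:
  assumes L: "prime L" and t: "0 < t" "t < L"
  shows "real (card (close_rates L t \<times> close_rates L t)) \<le> (real L)\<^sup>2 / (200 * real t * sqrt (real t)) + 8"
proof -
  define X where "X = real L / (40 * real t powr (3/4))"
  have "0 < real t powr (3/4)" using t by simp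
  then have "close_rates L t = {p. p < L \<and> real (dist_to_mult ((t * p) mod L) L) < X}"
    unfolding close_rates_def X_def by (simp add: less_divide_eq mult.commute mult.left_commute)
  also have "card \<dots> = card {r. r < L \<and> real (dist_to_mult r L) < X}"
  proof (rule card_mult_mod_preimage)
    show "coprime t L" using L t by (simp add: coprime_commute prime_imp_coprime_nat nat_dvd_not_less)
  qed
  finally have "real (card (close_rates L t)) \<le> 2 * max 0 X + 2"
    using card_dist_to_mult_less[of L X] L prime_gt_0_nat by simp
  moreover have "0 \<le> X" unfolding X_def by simp
  ultimately have "real (card (close_rates L t)) ^ 2 \<le> (2 * X + 2) ^ 2" by (intro power_mono) auto
  also have "\<dots> = 8 * X\<^sup>2 + 8 - 4 * (X - 1)\<^sup>2" by (simp add: power2_eq_square algebra_simps)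
  also have "\<dots> \<le> 8 * X\<^sup>2 + 8" by simp
  also have "8 * X\<^sup>2 = (real L)\<^sup>2 / (200 * real t * sqrt (real t))"
    unfolding X_def by (simp add: power_divide power_mult_distrib powr_three_quarters_sq)
  finally show ?thesis by (simp add: card_cartesian_product power2_eq_square)
qed

text \<open>The telescoping step \<open>(n+1)\<^bsup>-3/2\<^esup> \<le> 2 n\<^bsup>-1/2\<^esup> - 2 (n+1)\<^bsup>-1/2\<^esup>\<close>, with \<open>a = \<surd>n\<close>, \<open>b = \<surd>(n+1)\<close>.\<close>
lemma inverse_cube_le_telescope:
  fixes a b :: real
  assumes a: "0 < a" and b: "0 < b" and e: "b\<^sup>2 = a\<^sup>2 + 1"
  shows "1 / (b * b * b) \<le> 2 / a - 2 / b"
proof -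
  have "a\<^sup>2 < b\<^sup>2" using e by simp
  then have ba: "a < b" using a b by (simp add: power_less_imp_less_base)
  have h: "(b - a) * (b + a) = 1" using e by (simp add: algebra_simps power2_eq_square)
  have "a * (a + b) \<le> b * (b + b)" using ba a b by (intro mult_mono) auto
  then have "a * (a + b) * (b - a) \<le> b * (b + b) * (b - a)" using ba by (intro mult_right_mono) auto
  moreover have "a * (a + b) * (b - a) = a * ((b - a) * (b + a))" by (simp add: algebra_simps)
  ultimately have "a \<le> 2 * b * b * (b - a)" unfolding h by (simp add: algebra_simps)
  then have "1 / (b * b * b) \<le> 2 * (b - a) / (a * b)" using a b by (simp add: field_simps)
  also have "\<dots> = 2 / a - 2 / b" using a b by (simp add: field_simps)
  finally show ?thesis .
qed

lemma sum_inverse_three_halves_le: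
  assumes "1 \<le> n"
  shows "(\<Sum>t\<in>{1..n}. 1 / (real t * sqrt (real t))) \<le> 3 - 2 / sqrt (real n)"
  using assms
proof (induction n rule: nat_induct_at_least)
  case (Suc n)
  have "1 / (sqrt (Suc n) * sqrt (Suc n) * sqrt (Suc n)) \<le> 2 / sqrt n - 2 / sqrt (Suc n)"
    by (rule inverse_cube_le_telescope) (use Suc in auto)
  moreover have "sqrt (Suc n) * sqrt (Suc n) * sqrt (Suc n) = real (Suc n) * sqrt (Suc n)" by simp
  ultimately have "1 / (real (Suc n) * sqrt (Suc n)) \<le> 2 / sqrt n - 2 / sqrt (Suc n)" by simp
  moreover have "(\<Sum>t\<in>{1..Suc n}. 1 / (real t * sqrt (real t)))
     = (\<Sum>t\<in>{1..n}. 1 / (real t * sqrt (real t))) + 1 / (real (Suc n) * sqrt (Suc n))"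
    using Suc by (simp add: sum.atLeast_Suc_atMost_Suc_shift)
  ultimately show ?case using Suc by linarith
qed simp

lemma card_bad_pairs_le:
  assumes L: "prime L"
  shows "real (card (\<Union>t\<in>{1..<L}. close_rates L t \<times> close_rates L t)) \<le> 3 * (real L)\<^sup>2 / 200 + 8 * real L"
proof -
  have sum3: "(\<Sum>t\<in>{1..<L}. 1 / (real t * sqrt (real t))) \<le> 3"
  proof (cases "L \<le> 1")
    case False
    have "(\<Sum>t\<in>{1..L-1}. 1 / (real t * sqrt (real t))) \<le> 3 - 2 / sqrt (real (L - 1))"
      using False by (intro sum_inverse_three_halves_le) auto
    moreover have "0 \<le> 2 / sqrt (real (L - 1))" by simp
    moreover have "{1..<L} = {1..L-1}" using False by auto
    ultimately show ?thesis by (simp only:)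
  qed simp
  have "real (card (\<Union>t\<in>{1..<L}. close_rates L t \<times> close_rates L t))
      \<le> (\<Sum>t\<in>{1..<L}. real (card (close_rates L t \<times> close_rates L t)))"
    using card_UN_le[of "{1..<L}" "\<lambda>t. close_rates L t \<times> close_rates L t"] by (simp flip: of_nat_sum)
  also have "\<dots> \<le> (\<Sum>t\<in>{1..<L}. (real L)\<^sup>2 / 200 * (1 / (real t * sqrt (real t))) + 8)"
    using card_close_rates_sq[OF L] by (intro sum_mono) (simp add: mult.assoc)
  also have "\<dots> = (real L)\<^sup>2 / 200 * (\<Sum>t\<in>{1..<L}. 1 / (real t * sqrt (real t))) + 8 * real (L - 1)"
    by (simp add: sum.distrib sum_distrib_left)
  also have "\<dots> \<le> (real L)\<^sup>2 / 200 * 3 + 8 * real L"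
    using sum3 by (intro add_mono mult_left_mono) auto
  finally show ?thesis by simp
qed

text \<open>Zones of even and odd index take their first rate in the bands \<open>p/L < 1/4\<close> and
  \<open>p/L \<ge> 5/8\<close> respectively, so that neighbouring zones have clearly different frequencies of
  the letter 1.\<close>
definition slope_band :: "nat \<Rightarrow> nat \<Rightarrow> nat \<Rightarrow> bool" where
  "slope_band j L p \<longleftrightarrow> (if even j then 4 * p < L else 5 * L \<le> 8 * p)"

lemma card_odd_in_slope_band:
  "real L / 16 - 3 \<le> real (card {p. p < L \<and> odd p \<and> slope_band j L p})"
proof -
  define a where "a = (if even j then 0 else (5 * L + 15) div 16)"
  define b where "b = (if even j then (L - 4) div 8 else L div 2)"
  define U where "U = (\<lambda>u. 2 * u + 1) ` {a..<b}"
  have "U \<subseteq> {p. p < L \<and> odd p \<and> slope_band j L p}"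
    unfolding U_def a_def b_def slope_band_def by (cases "even j") auto
  then have "card U \<le> card {p. p < L \<and> odd p \<and> slope_band j L p}"
    by (intro card_mono) auto
  moreover have "card U = b - a" unfolding U_def by (subst card_image) (auto simp: inj_on_def)
  moreover have "L \<le> 16 * (b - a) + 48"
  proof (cases "even j")
    case True
    have "L \<le> 16 * ((L - 4) div 8) + 48" by presburger
    then show ?thesis using True unfolding a_def b_def by simp
  next
    case False
    have "L \<le> 2 * (L div 2) + 1" "16 * ((5 * L + 15) div 16) \<le> 5 * L + 15" by linarith+
    then have "L \<le> 16 * (L div 2 - (5 * L + 15) div 16) + 48" by linarith
    then show ?thesis using False unfolding a_def b_def by simp
  qed
  then have "real L / 16 - 3 \<le> real (b - a)" by linarith
  ultimately show ?thesis by linarith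
qed

lemma exists_good_pair:
  assumes L: "prime L" "300 \<le> L"
  shows "\<exists>p\<^sub>1 p\<^sub>2. p\<^sub>1 < L \<and> p\<^sub>2 < L \<and> odd p\<^sub>1 \<and> slope_band j L p\<^sub>1 \<and> good_pair L p\<^sub>1 p\<^sub>2"
proof -
  define B where "B = {p. p < L \<and> odd p \<and> slope_band j L p} \<times> {..<L}"
  define Bad where "Bad = (\<Union>t\<in>{1..<L}. close_rates L t \<times> close_rates L t)"
  have "(real L / 16 - 3) * real L \<le> real (card B)"
    unfolding B_def using card_odd_in_slope_band[of L j]
    by (simp add: card_cartesian_product mult_right_mono)
  moreover have "3 * (real L)\<^sup>2 / 200 + 8 * real L < (real L / 16 - 3) * real L"
  proof -
    have "0 < real L * (19 * real L / 400 - 11)" using L by (intro mult_pos_pos) auto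
    then show ?thesis by (simp add: power2_eq_square algebra_simps)
  qed
  ultimately have "card Bad < card B" using card_bad_pairs_le[OF L(1)] unfolding Bad_def by linarith
  moreover have "finite Bad" unfolding Bad_def close_rates_def by auto
  ultimately have "\<not> B \<subseteq> Bad" using card_mono by (metis not_le)
  then obtain p\<^sub>1 p\<^sub>2 where p: "(p\<^sub>1, p\<^sub>2) \<in> B" "(p\<^sub>1, p\<^sub>2) \<notin> Bad" by auto
  have "good_pair L p\<^sub>1 p\<^sub>2" unfolding good_pair_def
  proof (intro allI impI)
    fix t assume t: "0 < t \<and> t < L"
    then have "p\<^sub>1 \<notin> close_rates L t \<or> p\<^sub>2 \<notin> close_rates L t" using p unfolding Bad_def by auto
    then show "real L \<le> 40 * real (dist_to_mult (t * p\<^sub>1) L) * real t powr (3/4) \<or>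
        real L \<le> 40 * real (dist_to_mult (t * p\<^sub>2) L) * real t powr (3/4)"
      using p(1) unfolding B_def close_rates_def by auto
  qed
  then show ?thesis using p(1) unfolding B_def by blast
qed


section \<open>Arithmetic progressions in an interleaved word\<close>

lemma arith_prog_of_const_increment:
  fixes g :: "nat \<Rightarrow> nat"
  assumes "\<forall>i<F. g (q + (i + 1) * m) = g (q + i * m) + c" and "i \<le> F"
  shows "g (q + i * m) = g q + i * c"
  using assms(2)
proof (induction i)
  case (Suc i)
  then show ?case using assms(1) by (simp add: add.assoc)
qed simp

text \<open>The case \<open>m = L\<close> is excluded by the parity of \<open>p\<^sub>1\<close>; otherwise the block counts force
  \<open>J\<close> consecutive multiples of \<open>m p\<^sub>1\<close> and of \<open>m p\<^sub>2\<close> to stay within one period modulo \<open>L\<close>.\<close>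
lemma twin_progression_short:
  assumes L: "0 < L" and p: "odd p\<^sub>1" "good_pair L p\<^sub>1 p\<^sub>2" and m: "0 < m" "m < 2 * L"
    and inc1: "\<forall>i<F. ones_prefix L p\<^sub>1 (q + (i + 1) * m) = ones_prefix L p\<^sub>1 (q + i * m) + c\<^sub>1"
    and inc2: "\<forall>i<F. twos_prefix L p\<^sub>2 (q + (i + 1) * m) = twos_prefix L p\<^sub>2 (q + i * m) + c\<^sub>2"
  shows "real F \<le> 80 * real m powr (3/4) + 1"
proof (cases "F \<le> 1")
  case True
  then have "real F \<le> 1" by simp
  moreover have "0 \<le> real m powr (3/4)" by simp
  ultimately show ?thesis by linarith
next
  case False
  note prog1 = arith_prog_of_const_increment[OF inc1] and prog2 = arith_prog_of_const_increment[OF inc2]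
  show ?thesis
  proof (cases "m = L")
    case True
    have "ones_prefix L p\<^sub>1 (q + 2 * m) = ones_prefix L p\<^sub>1 q + 2 * c\<^sub>1" using prog1[of 2] False by simp
    moreover have "ones_prefix L p\<^sub>1 (q + 2 * m) = ones_prefix L p\<^sub>1 q + p\<^sub>1"
      using ones_prefix_add_period[OF L] True by simp
    ultimately show ?thesis using p(1) by simp
  next
    case mL: False
    define J where "J = F div 2"
    have "ones_prefix L p\<^sub>1 (q + 2 * J * m) = ones_prefix L p\<^sub>1 q + 2 * J * c\<^sub>1"
         "twos_prefix L p\<^sub>2 (q + 2 * J * m) = twos_prefix L p\<^sub>2 q + 2 * J * c\<^sub>2"
      using prog1[of "2 * J"] prog2[of "2 * J"] unfolding J_def by simp_all
    moreover have "(q + 2 * J * m + 1) div 2 = (q + 1) div 2 + J * m" "(q + 2 * J * m) div 2 = q div 2 + J * m"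
      by simp_all
    ultimately have "((q + 1) div 2 * p\<^sub>1 + J * (m * p\<^sub>1)) div L = ((q + 1) div 2 * p\<^sub>1) div L + J * (2 * c\<^sub>1)"
        "(q div 2 * p\<^sub>2 + J * (m * p\<^sub>2)) div L = (q div 2 * p\<^sub>2) div L + J * (2 * c\<^sub>2)"
      unfolding ones_prefix_def twos_prefix_def by (simp_all add: algebra_simps)
    then have "J * dist_to_mult (m * p\<^sub>1) L < L" "J * dist_to_mult (m * p\<^sub>2) L < L"
      by (simp_all add: dist_to_mult_bound_of_div_eq[OF L])
    then have "real J < 40 * real m powr (3/4)"
      using good_pair_progression_bound[OF L p(2) m(1,2) mL] by blast
    moreover have "F \<le> 2 * J + 1" unfolding J_def by simp
    ultimately show ?thesis by linarith
  qed
qed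

lemma twin_progression_bound:
  assumes L: "0 < L" and p: "odd p\<^sub>1" "good_pair L p\<^sub>1 p\<^sub>2" and \<theta>: "0 \<le> \<theta>"
    and E: "real E \<le> 2 * \<theta> * real L + 1" and m: "0 < m" and len: "q + F * m \<le> 2 * L * E"
    and inc1: "\<forall>i<F. ones_prefix L p\<^sub>1 (q + (i + 1) * m) = ones_prefix L p\<^sub>1 (q + i * m) + c\<^sub>1"
    and inc2: "\<forall>i<F. twos_prefix L p\<^sub>2 (q + (i + 1) * m) = twos_prefix L p\<^sub>2 (q + i * m) + c\<^sub>2"
  shows "real F \<le> \<theta> * real m + 80 * real m powr (3/4) + 2"
proof (cases "m < 2 * L")
  case True
  moreover have "0 \<le> \<theta> * real m" using \<theta> by simp
  ultimately show ?thesis using twin_progression_short[OF L p m True inc1 inc2] by linarith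
next
  case False
  then have mL: "2 * real L \<le> real m" by simp
  have "F * m \<le> 2 * L * E" using len by linarith
  then have "real (F * m) \<le> real (2 * L * E)" by (simp only: of_nat_le_iff)
  then have "real F * real m \<le> 2 * real L * real E" by simp
  also have "\<dots> \<le> 2 * real L * (2 * \<theta> * real L + 1)" using E by (intro mult_left_mono) auto
  also have "\<dots> = \<theta> * (2 * real L) * (2 * real L) + 2 * real L" by (simp add: algebra_simps)
  also have "\<dots> \<le> \<theta> * real m * real m + real m"
    using mL \<theta> by (intro add_mono mult_mono mult_left_mono) auto
  finally have "real F * real m \<le> (\<theta> * real m + 1) * real m" by (simp add: algebra_simps)
  then have "real F \<le> \<theta> * real m + 1" using m by simp
  moreover have "0 \<le> real m powr (3/4)" by simp
  ultimately show ?thesis by linarith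
qed

lemma ones_prefix_increment_bounds:
  assumes L: "0 < L" and pL: "p < L" and inc: "ones_prefix L p (x + m) = ones_prefix L p x + c"
  shows "real m * real p - 3 * real L < 2 * real c * real L"
    and "2 * real c * real L < real m * real p + 3 * real L"
proof -
  define h\<^sub>1 where "h\<^sub>1 = (x + 1) div 2"
  define h\<^sub>2 where "h\<^sub>2 = (x + m + 1) div 2"
  have floor: "real L * real (h * p div L) \<le> real h * real p"
    "real h * real p < real L * real (h * p div L) + real L" for h
  proof -
    have "h * p = L * (h * p div L) + h * p mod L" "h * p mod L < L" using L by simp_all
    then have "L * (h * p div L) \<le> h * p" "h * p < L * (h * p div L) + L" by linarith+
    then show "real L * real (h * p div L) \<le> real h * real p"
      "real h * real p < real L * real (h * p div L) + real L"
      by (metis of_nat_le_iff of_nat_mult, metis of_nat_add of_nat_less_iff of_nat_mult)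
  qed
  have "real (2 * h\<^sub>2) \<le> real (x + m + 1)" "real (x + m) \<le> real (2 * h\<^sub>2)"
    "real (2 * h\<^sub>1) \<le> real (x + 1)" "real x \<le> real (2 * h\<^sub>1)"
    unfolding h\<^sub>1_def h\<^sub>2_def of_nat_le_iff by linarith+
  then have "2 * real h\<^sub>2 * real p \<le> (real x + real m + 1) * real p"
    "(real x + real m) * real p \<le> 2 * real h\<^sub>2 * real p"
    "2 * real h\<^sub>1 * real p \<le> (real x + 1) * real p" "real x * real p \<le> 2 * real h\<^sub>1 * real p"
    by (simp_all add: mult_right_mono)
  moreover have "real (h\<^sub>2 * p div L) = real (h\<^sub>1 * p div L) + real c"
    using inc unfolding ones_prefix_def h\<^sub>1_def h\<^sub>2_def by simp
  moreover note floor[of h\<^sub>1] floor[of h\<^sub>2]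
  moreover have "real p < real L" using pL by simp
  ultimately show "real m * real p - 3 * real L < 2 * real c * real L"
    and "2 * real c * real L < real m * real p + 3 * real L"
    by (simp_all add: algebra_simps)
qed

lemma count_in_both_bands_imp_short:
  assumes "4 * p < L" "5 * L' \<le> 8 * p'" "0 < L" "0 < L'"
    and "2 * real c * real L < real m * real p + 3 * real L"
    and "real m * real p' - 3 * real L' < 2 * real c * real L'"
  shows "m < 16"
proof -
  have "real m * (4 * real p) \<le> real m * real L" using assms(1) by (intro mult_left_mono) auto
  then have "8 * real c * real L < (real m + 12) * real L" using assms(5) by (simp add: algebra_simps)
  then have "8 * real c < real m + 12" using assms(3) by simp
  have "real m * (5 * real L') \<le> real m * (8 * real p')" using assms(2) by (intro mult_left_mono) auto
  then have "(5 * real m - 24) * real L' < 16 * real c * real L'" using assms(6) by (simp add: algebra_simps)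
  then have "5 * real m - 24 < 16 * real c" using assms(4) by simp
  with \<open>8 * real c < real m + 12\<close> show ?thesis by linarith
qed


section \<open>The word\<close>

definition prime_above :: "nat \<Rightarrow> nat" where
  "prime_above n = (SOME p. prime p \<and> n \<le> p)"

lemma prime_above_prime_ge: "prime (prime_above n) \<and> n \<le> prime_above n"
proof -
  obtain p where "prime p" "n < p" using bigger_prime by blast
  then have "\<exists>p. prime p \<and> n \<le> p" by auto
  then show ?thesis unfolding prime_above_def by (rule someI_ex)
qed

definition zone_exponent :: "real \<Rightarrow> nat \<Rightarrow> nat" where
  "zone_exponent \<theta> L = max 1 (nat \<lceil>2 * \<theta> * real L\<rceil>)"

text \<open>The bound \<open>300\<close> is needed for good pairs to exist, the summand \<open>j\<^sup>2\<close> keeps the number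
  of zones shorter than a given length small, and the last argument of \<open>max\<close> makes zone
  lengths at least double.\<close>
primrec zone_prime :: "real \<Rightarrow> nat \<Rightarrow> nat" where
  "zone_prime \<theta> 0 = prime_above 300"
| "zone_prime \<theta> (Suc j) = prime_above
     (max (300 + Suc j * Suc j) (2 * zone_prime \<theta> j * zone_exponent \<theta> (zone_prime \<theta> j)))"

definition admissible_rates :: "nat \<Rightarrow> nat \<Rightarrow> nat \<times> nat \<Rightarrow> bool" where
  "admissible_rates j L r \<longleftrightarrow>
     fst r < L \<and> snd r < L \<and> odd (fst r) \<and> slope_band j L (fst r) \<and> good_pair L (fst r) (snd r)"

definition zone_rates :: "real \<Rightarrow> nat \<Rightarrow> nat \<times> nat" where
  "zone_rates \<theta> j = (SOME r. admissible_rates j (zone_prime \<theta> j) r)"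

definition zone_word :: "real \<Rightarrow> nat \<Rightarrow> nat \<Rightarrow> nat" where
  "zone_word \<theta> j = twin_word (zone_prime \<theta> j) (fst (zone_rates \<theta> j)) (snd (zone_rates \<theta> j))"

definition zone_len :: "real \<Rightarrow> nat \<Rightarrow> nat" where
  "zone_len \<theta> j = 2 * zone_prime \<theta> j * zone_exponent \<theta> (zone_prime \<theta> j)"

definition zone_start :: "real \<Rightarrow> nat \<Rightarrow> nat" where
  "zone_start \<theta> j = (\<Sum>i<j. zone_len \<theta> i)"

definition zone_of :: "real \<Rightarrow> nat \<Rightarrow> nat" where
  "zone_of \<theta> n = (LEAST j. n < zone_start \<theta> (Suc j))"

definition crit_word :: "real \<Rightarrow> nat \<Rightarrow> nat" where
  "crit_word \<theta> n = zone_word \<theta> (zone_of \<theta> n) (n - zone_start \<theta> (zone_of \<theta> n))"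

lemma crit_word_range: "crit_word \<theta> n \<in> {0, 1, 2}"
  unfolding crit_word_def zone_word_def by (rule twin_word_range)

lemma zone_prime_prime: "prime (zone_prime \<theta> j)"
  by (cases j) (simp_all add: prime_above_prime_ge)

lemma zone_prime_ge: "300 + j * j \<le> zone_prime \<theta> j"
  by (cases j) (auto intro: le_trans[OF _ prime_above_prime_ge[THEN conjunct2]])

lemma zone_prime_pos: "0 < zone_prime \<theta> j"
  using zone_prime_ge[of j \<theta>] by linarith

lemma zone_rates_admissible: "admissible_rates j (zone_prime \<theta> j) (zone_rates \<theta> j)"
proof -
  obtain p\<^sub>1 p\<^sub>2 where "p\<^sub>1 < zone_prime \<theta> j" "p\<^sub>2 < zone_prime \<theta> j" "odd p\<^sub>1"
      "slope_band j (zone_prime \<theta> j) p\<^sub>1" "good_pair (zone_prime \<theta> j) p\<^sub>1 p\<^sub>2"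
    using exists_good_pair[OF zone_prime_prime] zone_prime_ge[of j \<theta>] by (meson le_add1 order_trans)
  then have "admissible_rates j (zone_prime \<theta> j) (p\<^sub>1, p\<^sub>2)" unfolding admissible_rates_def by simp
  then show ?thesis unfolding zone_rates_def by (rule someI)
qed

lemma zone_exponent_ge: "2 * \<theta> * real L \<le> real (zone_exponent \<theta> L)"
  unfolding zone_exponent_def by linarith

lemma zone_exponent_le:
  assumes "0 \<le> \<theta>"
  shows "real (zone_exponent \<theta> L) \<le> 2 * \<theta> * real L + 1"
  using assms unfolding zone_exponent_def by (simp add: max_def)

lemma zone_len_ge: "2 * zone_prime \<theta> j \<le> zone_len \<theta> j"
  unfolding zone_len_def zone_exponent_def by simp

lemma zone_len_sq_le: "j * j \<le> zone_len \<theta> j"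
  using zone_len_ge[of \<theta> j] zone_prime_ge[of j \<theta>] by linarith

lemma zone_len_pos: "0 < zone_len \<theta> j"
  using zone_len_ge[of \<theta> j] zone_prime_pos[of \<theta> j] by linarith

lemma zone_len_double: "2 * zone_len \<theta> j \<le> zone_len \<theta> (Suc j)"
proof -
  have "zone_len \<theta> j \<le> zone_prime \<theta> (Suc j)"
    unfolding zone_len_def zone_prime.simps by (rule max.boundedE[OF prime_above_prime_ge[THEN conjunct2]])
  then show ?thesis using zone_len_ge[of \<theta> "Suc j"] by linarith
qed

lemma zone_start_Suc [simp]: "zone_start \<theta> (Suc j) = zone_start \<theta> j + zone_len \<theta> j"
  unfolding zone_start_def by simp

lemma strict_mono_zone_start: "strict_mono (zone_start \<theta>)"
  unfolding strict_mono_Suc_iff using zone_len_pos by simp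

lemma zone_of_bounds:
  "zone_start \<theta> (zone_of \<theta> n) \<le> n \<and> n < zone_start \<theta> (Suc (zone_of \<theta> n))"
proof
  have "n < zone_start \<theta> (Suc n)"
    using strict_mono_imp_increasing[OF strict_mono_zone_start, of "Suc n" \<theta>] by simp
  then show "n < zone_start \<theta> (Suc (zone_of \<theta> n))" unfolding zone_of_def by (rule LeastI)
  show "zone_start \<theta> (zone_of \<theta> n) \<le> n"
  proof (cases "zone_of \<theta> n")
    case (Suc i)
    then have "\<not> n < zone_start \<theta> (Suc i)" unfolding zone_of_def by (metis lessI not_less_Least)
    then show ?thesis using Suc by simp
  qed (simp add: zone_start_def)
qed

lemma zone_of_eqI:
  assumes "zone_start \<theta> j \<le> n" "n < zone_start \<theta> (Suc j)"
  shows "zone_of \<theta> n = j"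
proof -
  have "zone_start \<theta> (zone_of \<theta> n) < zone_start \<theta> (Suc j)"
       "zone_start \<theta> j < zone_start \<theta> (Suc (zone_of \<theta> n))"
    using assms zone_of_bounds[of \<theta> n] by linarith+
  then have "zone_of \<theta> n < Suc j" "j < Suc (zone_of \<theta> n)"
    by (simp_all only: strict_mono_less[OF strict_mono_zone_start])
  then show ?thesis by linarith
qed

lemma crit_word_in_zone:
  assumes "zone_start \<theta> j \<le> n" "n < zone_start \<theta> (Suc j)"
  shows "crit_word \<theta> n = zone_word \<theta> j (n - zone_start \<theta> j)"
  unfolding crit_word_def using zone_of_eqI[OF assms] by simp

lemma count_in_zone:
  assumes "zone_start \<theta> j \<le> x" "x \<le> y" "y \<le> zone_start \<theta> (Suc j)"
  defines "S \<equiv> zone_start \<theta> j" and "L \<equiv> zone_prime \<theta> j"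
    and "p\<^sub>1 \<equiv> fst (zone_rates \<theta> j)" and "p\<^sub>2 \<equiv> snd (zone_rates \<theta> j)"
  shows "count_in (crit_word \<theta>) 1 x y + ones_prefix L p\<^sub>1 (x - S) = ones_prefix L p\<^sub>1 (y - S)"
    and "count_in (crit_word \<theta>) 2 x y + twos_prefix L p\<^sub>2 (x - S) = twos_prefix L p\<^sub>2 (y - S)"
proof -
  have p: "p\<^sub>1 \<le> L" "p\<^sub>2 \<le> L"
    using zone_rates_admissible[of j \<theta>] unfolding admissible_rates_def p\<^sub>1_def p\<^sub>2_def L_def by auto
  have count: "count_in (crit_word \<theta>) a x y = card {i. x - S \<le> i \<and> i < y - S \<and> twin_word L p\<^sub>1 p\<^sub>2 i = a}"
    for a
  proof -
    have "count_in (crit_word \<theta>) a x y = card {i. x - S \<le> i \<and> i < y - S \<and> crit_word \<theta> (i + S) = a}"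
      unfolding count_in_def using assms(1) S_def by (intro card_interval_shift) simp
    also have "\<dots> = card {i. x - S \<le> i \<and> i < y - S \<and> twin_word L p\<^sub>1 p\<^sub>2 i = a}"
    proof (intro arg_cong[where f = card] Collect_cong conj_cong refl)
      fix i assume "x - S \<le> i" "i < y - S"
      then show "(crit_word \<theta> (i + S) = a) = (twin_word L p\<^sub>1 p\<^sub>2 i = a)"
        using assms(1,3) by (subst crit_word_in_zone[of \<theta> j]) (auto simp: zone_word_def S_def L_def p\<^sub>1_def p\<^sub>2_def)
    qed
    finally show ?thesis .
  qed
  have xy: "x - S \<le> y - S" using assms(2) by simp
  have L: "0 < L" unfolding L_def by (rule zone_prime_pos)
  show "count_in (crit_word \<theta>) 1 x y + ones_prefix L p\<^sub>1 (x - S) = ones_prefix L p\<^sub>1 (y - S)"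
    unfolding count using card_interval_add_card_prefix[OF xy, of "\<lambda>i. twin_word L p\<^sub>1 p\<^sub>2 i = 1"]
      card_twin_word_ones[OF p(1) L] by simp
  show "count_in (crit_word \<theta>) 2 x y + twos_prefix L p\<^sub>2 (x - S) = twos_prefix L p\<^sub>2 (y - S)"
    unfolding count using card_interval_add_card_prefix[OF xy, of "\<lambda>i. twin_word L p\<^sub>1 p\<^sub>2 i = 2"]
      card_twin_word_twos[OF p(2) L] by simp
qed

lemma zone_is_power:
  "kab_power_at k (crit_word \<theta>) (zone_start \<theta> j) (2 * zone_prime \<theta> j) (zone_exponent \<theta> (zone_prime \<theta> j))"
proof (rule kab_power_at_if_periodic)
  show "0 < 2 * zone_prime \<theta> j" "0 < zone_exponent \<theta> (zone_prime \<theta> j)"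
    using zone_prime_pos by (simp_all add: zone_exponent_def)
  fix n assume n: "zone_start \<theta> j \<le> n"
    "n + 2 * zone_prime \<theta> j < zone_start \<theta> j + zone_exponent \<theta> (zone_prime \<theta> j) * (2 * zone_prime \<theta> j)"
  then have "n + 2 * zone_prime \<theta> j < zone_start \<theta> (Suc j)" by (simp add: zone_len_def algebra_simps)
  then have "crit_word \<theta> (n + 2 * zone_prime \<theta> j) = zone_word \<theta> j ((n - zone_start \<theta> j) + 2 * zone_prime \<theta> j)"
    "crit_word \<theta> n = zone_word \<theta> j (n - zone_start \<theta> j)"
    using n(1) by (simp_all add: crit_word_in_zone)
  then show "crit_word \<theta> (n + 2 * zone_prime \<theta> j) = crit_word \<theta> n"
    by (simp add: zone_word_def twin_word_periodic[OF zone_prime_pos])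
qed


section \<open>Abelian powers in the word\<close>

definition in_zone :: "real \<Rightarrow> nat \<Rightarrow> nat \<Rightarrow> nat \<Rightarrow> bool" where
  "in_zone \<theta> j x y \<longleftrightarrow> zone_start \<theta> j \<le> x \<and> y \<le> zone_start \<theta> (Suc j)"

lemma count_ones_in_zone_bounds:
  assumes "in_zone \<theta> j x (x + m)"
  defines "c \<equiv> count_in (crit_word \<theta>) 1 x (x + m)"
    and "L \<equiv> zone_prime \<theta> j" and "p \<equiv> fst (zone_rates \<theta> j)"
  shows "real m * real p - 3 * real L < 2 * real c * real L"
    and "2 * real c * real L < real m * real p + 3 * real L"
proof -
  have "ones_prefix L p ((x - zone_start \<theta> j) + m) = ones_prefix L p (x - zone_start \<theta> j) + c"
    using count_in_zone(1)[of \<theta> j x "x + m"] assms(1)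
    unfolding in_zone_def c_def L_def p_def by (simp add: add.commute)
  moreover have "0 < L" "p < L"
    using zone_prime_pos zone_rates_admissible[of j \<theta>] unfolding L_def p_def admissible_rates_def by auto
  ultimately show "real m * real p - 3 * real L < 2 * real c * real L"
    and "2 * real c * real L < real m * real p + 3 * real L"
    using ones_prefix_increment_bounds by blast+
qed

lemma adjacent_zones_count_ones_differ:
  assumes m: "16 \<le> m" and z: "in_zone \<theta> j x (x + m)" and z': "in_zone \<theta> (Suc j) x' (x' + m)"
  shows "count_in (crit_word \<theta>) 1 x (x + m) \<noteq> count_in (crit_word \<theta>) 1 x' (x' + m)"
proof
  assume eq: "count_in (crit_word \<theta>) 1 x (x + m) = count_in (crit_word \<theta>) 1 x' (x' + m)"
  note b = count_ones_in_zone_bounds[OF z] and b' = count_ones_in_zone_bounds[OF z', folded eq]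
  have "slope_band j (zone_prime \<theta> j) (fst (zone_rates \<theta> j))"
    "slope_band (Suc j) (zone_prime \<theta> (Suc j)) (fst (zone_rates \<theta> (Suc j)))"
    using zone_rates_admissible unfolding admissible_rates_def by blast+
  then have "m < 16"
    using count_in_both_bands_imp_short[OF _ _ zone_prime_pos zone_prime_pos b(2) b'(1)]
      count_in_both_bands_imp_short[OF _ _ zone_prime_pos zone_prime_pos b'(2) b(1)]
    unfolding slope_band_def by (cases "even j") auto
  with m show False by simp
qed

lemma block_in_zone_exists:
  assumes m: "0 < m" and p: "p < zone_start \<theta> j" and e: "zone_start \<theta> (Suc j) \<le> p + e * m"
    and len: "2 * m \<le> zone_len \<theta> j"
  shows "\<exists>i<e. in_zone \<theta> j (p + i * m) (p + i * m + m)"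
proof -
  define i where "i = (LEAST i. zone_start \<theta> j \<le> p + i * m)"
  have "zone_start \<theta> j \<le> p + e * m" using e by simp
  then have start: "zone_start \<theta> j \<le> p + i * m" unfolding i_def by (rule LeastI)
  with p obtain i' where i': "i = Suc i'" by (cases i) auto
  then have "\<not> zone_start \<theta> j \<le> p + i' * m" unfolding i_def by (metis lessI not_less_Least)
  then have stop: "p + i * m + m < zone_start \<theta> (Suc j)" using i' len by simp
  then have "i * m < e * m" using e by linarith
  then show ?thesis using start stop unfolding in_zone_def by (intro exI[of _ i]) auto
qed

text \<open>Zone lengths double, so a block in zone \<open>j\<close> and a block in a later zone force a block
  in zone \<open>j + 1\<close>.\<close>
lemma inner_blocks_same_zone:
  assumes ab: "abelian_power_at (crit_word \<theta>) p m e" and m: "16 \<le> m"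
    and "i < e" "in_zone \<theta> j (p + i * m) (p + i * m + m)"
    and "i' < e" "in_zone \<theta> j' (p + i' * m) (p + i' * m + m)"
  shows "j = j'"
proof -
  have False if i: "i < e" "in_zone \<theta> j (p + i * m) (p + i * m + m)"
    and i': "i' < e" "in_zone \<theta> j' (p + i' * m) (p + i' * m + m)" and "j < j'" for i i' j j'
  proof -
    have "\<exists>i\<^sub>2<e. in_zone \<theta> (Suc j) (p + i\<^sub>2 * m) (p + i\<^sub>2 * m + m)"
    proof (cases "j' = Suc j")
      case False
      then have "Suc (Suc j) \<le> j'" using \<open>j < j'\<close> by simp
      then have "zone_start \<theta> (Suc (Suc j)) \<le> zone_start \<theta> j'"
        by (rule strict_mono_leD[OF strict_mono_zone_start])
      also have "\<dots> \<le> p + i' * m" using i'(2) unfolding in_zone_def by simp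
      also have "\<dots> \<le> p + e * m" using i'(1) by simp
      finally have "zone_start \<theta> (Suc (Suc j)) \<le> p + e * m" .
      moreover have "2 * m \<le> zone_len \<theta> (Suc j)"
        using i(2) zone_len_double[of \<theta> j] unfolding in_zone_def by simp
      moreover have "p < zone_start \<theta> (Suc j)" using i(2) m unfolding in_zone_def by simp
      ultimately show ?thesis using m by (intro block_in_zone_exists) simp_all
    qed (use i' in blast)
    then obtain i\<^sub>2 where "i\<^sub>2 < e" "in_zone \<theta> (Suc j) (p + i\<^sub>2 * m) (p + i\<^sub>2 * m + m)" by blast
    moreover have "count_in (crit_word \<theta>) 1 (p + i * m) (p + i * m + m)
        = count_in (crit_word \<theta>) 1 (p + i\<^sub>2 * m) (p + i\<^sub>2 * m + m)"
      using ab i(1) \<open>i\<^sub>2 < e\<close> unfolding abelian_power_at_def by simp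
    ultimately show False using adjacent_zones_count_ones_differ[OF m i(2)] by blast
  qed
  then show ?thesis using assms by (metis linorder_neqE_nat)
qed

lemma blocks_in_zone_bound:
  assumes \<theta>: "0 \<le> \<theta>" and ab: "abelian_power_at (crit_word \<theta>) p m e" and m: "0 < m"
    and F: "i\<^sub>0 + F \<le> e" and inz: "\<forall>i<F. in_zone \<theta> j (p + (i\<^sub>0 + i) * m) (p + (i\<^sub>0 + i) * m + m)"
  shows "real F \<le> \<theta> * real m + 80 * real m powr (3/4) + 2"
proof (cases "F = 0")
  case True
  moreover have "0 \<le> \<theta> * real m" "0 \<le> real m powr (3/4)" using \<theta> by simp_all
  ultimately show ?thesis by simp
next
  case False
  define S L p\<^sub>1 p\<^sub>2 where "S = zone_start \<theta> j" and "L = zone_prime \<theta> j"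
    and "p\<^sub>1 = fst (zone_rates \<theta> j)" and "p\<^sub>2 = snd (zone_rates \<theta> j)"
  define q where "q = p + i\<^sub>0 * m - S"
  have S: "S \<le> p + i\<^sub>0 * m" using inz False unfolding in_zone_def S_def by auto
  obtain F' where F': "F = Suc F'" using False by (cases F) auto
  then have "in_zone \<theta> j (p + (i\<^sub>0 + F') * m) (p + (i\<^sub>0 + F') * m + m)" using inz by simp
  then have "p + i\<^sub>0 * m + F * m \<le> S + 2 * L * zone_exponent \<theta> L"
    unfolding in_zone_def S_def L_def F' by (simp add: algebra_simps zone_len_def)
  then have len: "q + F * m \<le> 2 * L * zone_exponent \<theta> L" unfolding q_def using S by linarith
  have inc: "ones_prefix L p\<^sub>1 (q + (i + 1) * m) = ones_prefix L p\<^sub>1 (q + i * m) + count_in (crit_word \<theta>) 1 p (p + m)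
      \<and> twos_prefix L p\<^sub>2 (q + (i + 1) * m) = twos_prefix L p\<^sub>2 (q + i * m) + count_in (crit_word \<theta>) 2 p (p + m)"
    if i: "i < F" for i
  proof -
    define x where "x = p + (i\<^sub>0 + i) * m"
    have x: "zone_start \<theta> j \<le> x" "x \<le> x + m" "x + m \<le> zone_start \<theta> (Suc j)"
      using inz i unfolding in_zone_def x_def by auto
    have "x - S = q + i * m" "x + m - S = q + (i + 1) * m"
      unfolding x_def q_def using S by (simp_all add: algebra_simps)
    moreover have "count_in (crit_word \<theta>) a x (x + m) = count_in (crit_word \<theta>) a p (p + m)" for a
      using ab i F unfolding abelian_power_at_def x_def by simp
    ultimately show ?thesis
      using count_in_zone[OF x] unfolding S_def L_def p\<^sub>1_def p\<^sub>2_def by simp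
  qed
  have "0 < L" "odd p\<^sub>1" "good_pair L p\<^sub>1 p\<^sub>2"
    using zone_prime_pos zone_rates_admissible[of j \<theta>]
    unfolding L_def p\<^sub>1_def p\<^sub>2_def admissible_rates_def by auto
  then show ?thesis
    using twin_progression_bound[OF _ _ _ \<theta> zone_exponent_le[OF \<theta>] m len] inc by blast
qed

lemma card_inner_blocks_le:
  assumes \<theta>: "0 \<le> \<theta>" and ab: "abelian_power_at (crit_word \<theta>) p m e" and m: "16 \<le> m"
  shows "real (card {i. i < e \<and> (\<exists>j. in_zone \<theta> j (p + i * m) (p + i * m + m))})
    \<le> \<theta> * real m + 80 * real m powr (3/4) + 2"
proof -
  define I where "I = {i. i < e \<and> (\<exists>j. in_zone \<theta> j (p + i * m) (p + i * m + m))}"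
  show ?thesis
  proof (cases "I = {}")
    case True
    moreover have "0 \<le> \<theta> * real m" "0 \<le> real m powr (3/4)" using \<theta> by simp_all
    ultimately show ?thesis unfolding I_def[symmetric] by simp
  next
    case False
    have fin: "finite I" unfolding I_def by simp
    define a b where "a = Min I" and "b = Max I"
    have "a \<in> I" "b \<in> I" "a \<le> b" unfolding a_def b_def using fin False by simp_all
    then obtain j j' where j: "a < e" "in_zone \<theta> j (p + a * m) (p + a * m + m)"
      and j': "b < e" "in_zone \<theta> j' (p + b * m) (p + b * m + m)" unfolding I_def by blast
    have "j' = j" using inner_blocks_same_zone[OF ab m j' j] .
    with j' have b_zone: "in_zone \<theta> j (p + b * m) (p + b * m + m)" by simp
    have "in_zone \<theta> j (p + (a + i) * m) (p + (a + i) * m + m)" if "i < Suc (b - a)" for i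
    proof -
      have "a * m \<le> (a + i) * m" "(a + i) * m \<le> b * m"
        using that \<open>a \<le> b\<close> by (simp, intro mult_le_mono1, linarith)
      then show ?thesis using j(2) b_zone unfolding in_zone_def by linarith
    qed
    then have "real (Suc (b - a)) \<le> \<theta> * real m + 80 * real m powr (3/4) + 2"
      using j'(1) \<open>a \<le> b\<close> m by (intro blocks_in_zone_bound[OF \<theta> ab]) auto
    moreover have "card I \<le> Suc (b - a)"
    proof -
      have "I \<subseteq> {a..b}" unfolding a_def b_def using fin by auto
      then show ?thesis using card_mono[of "{a..b}" I] by simp
    qed
    ultimately show ?thesis unfolding I_def by linarith
  qed
qed

lemma finite_zone_starts_below: "finite {j. zone_start \<theta> j < n}"
proof (rule finite_subset)
  show "{j. zone_start \<theta> j < n} \<subseteq> {..<n}"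
    using strict_mono_imp_increasing[OF strict_mono_zone_start] by (auto intro: le_less_trans)
qed simp

lemma card_crossing_blocks_le:
  assumes m: "0 < m"
  shows "card {i. i < e \<and> \<not> (\<exists>j. in_zone \<theta> j (p + i * m) (p + i * m + m))}
    \<le> card {j. p < zone_start \<theta> j \<and> zone_start \<theta> j < p + e * m}"
proof (rule card_inj_on_le)
  define N where "N = {i. i < e \<and> \<not> (\<exists>j. in_zone \<theta> j (p + i * m) (p + i * m + m))}"
  define \<phi> where "\<phi> i = Suc (zone_of \<theta> (p + i * m))" for i
  have \<phi>: "p + i * m < zone_start \<theta> (\<phi> i)" "zone_start \<theta> (\<phi> i) < p + i * m + m" if "i \<in> N" for i
    using that zone_of_bounds[of \<theta> "p + i * m"] unfolding N_def in_zone_def \<phi>_def by auto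
  have block_le: "i * m + m \<le> i' * m" if "i < i'" for i i'
    using that by (metis add.commute mult_Suc Suc_leI mult_le_mono1)
  show "inj_on \<phi> N"
  proof (rule linorder_inj_onI)
    fix i i' assume "i < i'" "i \<in> N" "i' \<in> N"
    then have "zone_start \<theta> (\<phi> i) < zone_start \<theta> (\<phi> i')"
      using \<phi>[of i] \<phi>[of i'] block_le[of i i'] by linarith
    then show "\<phi> i \<noteq> \<phi> i'" by auto
  qed auto
  show "\<phi> ` N \<subseteq> {j. p < zone_start \<theta> j \<and> zone_start \<theta> j < p + e * m}"
  proof clarify
    fix i assume "i \<in> N"
    moreover from this have "i * m + m \<le> e * m" using block_le[of i e] unfolding N_def by simp
    ultimately show "p < zone_start \<theta> (\<phi> i) \<and> zone_start \<theta> (\<phi> i) < p + e * m"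
      using \<phi>[of i] by linarith
  qed
  show "finite {j. p < zone_start \<theta> j \<and> zone_start \<theta> j < p + e * m}"
    by (rule finite_subset[OF _ finite_zone_starts_below]) auto
qed

lemma card_zones_across_le: "card {j. zone_start \<theta> j < b \<and> b \<le> zone_start \<theta> (Suc j)} \<le> 1"
proof -
  have "{j. zone_start \<theta> j < b \<and> b \<le> zone_start \<theta> (Suc j)} \<subseteq> {zone_of \<theta> (b - 1)}"
  proof clarify
    fix j assume "zone_start \<theta> j < b" "b \<le> zone_start \<theta> (Suc j)"
    then show "j = zone_of \<theta> (b - 1)" by (intro zone_of_eqI[symmetric]) auto
  qed
  then show ?thesis using card_mono[of "{zone_of \<theta> (b - 1)}"] by simp
qed

lemma card_long_inner_zones_le:
  assumes ab: "abelian_power_at (crit_word \<theta>) p m e" and m: "16 \<le> m"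
  shows "card {j. p < zone_start \<theta> j \<and> zone_start \<theta> (Suc j) < p + e * m \<and> 2 * m \<le> zone_len \<theta> j} \<le> 1"
    (is "card ?Z \<le> 1")
proof -
  have block: "\<exists>i<e. in_zone \<theta> j (p + i * m) (p + i * m + m)" if "j \<in> ?Z" for j
    using that m by (intro block_in_zone_exists) auto
  have "finite ?Z" by (rule finite_subset[OF _ finite_zone_starts_below[of \<theta> "p + e * m"]]) auto
  moreover have "\<forall>j\<in>?Z. \<forall>j'\<in>?Z. j = j'"
  proof (intro ballI)
    fix j j' assume "j \<in> ?Z" "j' \<in> ?Z"
    then obtain i i' where "i < e" "in_zone \<theta> j (p + i * m) (p + i * m + m)"
      "i' < e" "in_zone \<theta> j' (p + i' * m) (p + i' * m + m)" using block by blast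
    then show "j = j'" by (rule inner_blocks_same_zone[OF ab m])
  qed
  ultimately show ?thesis using card_le_Suc0_iff_eq[of ?Z] by simp
qed

text \<open>Zones shorter than \<open>2m\<close> are few because \<open>j\<^sup>2 \<le> zone_len \<theta> j\<close>.\<close>
lemma card_zone_starts_le:
  assumes ab: "abelian_power_at (crit_word \<theta>) p m e" and m: "16 \<le> m"
  shows "real (card {j. p < zone_start \<theta> j \<and> zone_start \<theta> j < p + e * m}) \<le> sqrt (2 * real m) + 3"
proof -
  define J\<^sub>1 where "J\<^sub>1 = {j::nat. j * j < 2 * m}"
  define J\<^sub>2 where "J\<^sub>2 = {j. zone_start \<theta> j < p + e * m \<and> p + e * m \<le> zone_start \<theta> (Suc j)}"
  define J\<^sub>3 where "J\<^sub>3 = {j. p < zone_start \<theta> j \<and> zone_start \<theta> (Suc j) < p + e * m \<and> 2 * m \<le> zone_len \<theta> j}"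
  have "{j. p < zone_start \<theta> j \<and> zone_start \<theta> j < p + e * m} \<subseteq> J\<^sub>1 \<union> J\<^sub>2 \<union> J\<^sub>3"
  proof (rule subsetI)
    fix j assume j: "j \<in> {j. p < zone_start \<theta> j \<and> zone_start \<theta> j < p + e * m}"
    consider "p + e * m \<le> zone_start \<theta> (Suc j)" | "zone_start \<theta> (Suc j) < p + e * m" "2 * m \<le> zone_len \<theta> j"
      | "zone_len \<theta> j < 2 * m" by linarith
    then show "j \<in> J\<^sub>1 \<union> J\<^sub>2 \<union> J\<^sub>3"
    proof cases
      case 3
      then have "j * j < 2 * m" using zone_len_sq_le[of j \<theta>] by linarith
      then show ?thesis unfolding J\<^sub>1_def by simp
    qed (use j in \<open>simp_all add: J\<^sub>2_def J\<^sub>3_def\<close>)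
  qed
  moreover have "finite (J\<^sub>1 \<union> J\<^sub>2 \<union> J\<^sub>3)"
  proof -
    have "J\<^sub>1 \<subseteq> {..<2 * m}" "J\<^sub>2 \<union> J\<^sub>3 \<subseteq> {j. zone_start \<theta> j < p + e * m}"
      unfolding J\<^sub>1_def J\<^sub>2_def J\<^sub>3_def by (auto intro: le_less_trans[OF le_square])
    then show ?thesis using finite_zone_starts_below by (metis finite_Un finite_lessThan finite_subset)
  qed
  ultimately have "card {j. p < zone_start \<theta> j \<and> zone_start \<theta> j < p + e * m} \<le> card (J\<^sub>1 \<union> J\<^sub>2 \<union> J\<^sub>3)"
    by (rule card_mono[rotated])
  also have "\<dots> \<le> card J\<^sub>1 + card J\<^sub>2 + card J\<^sub>3" by (meson card_Un_le add_le_mono1 order_trans)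
  finally show ?thesis
    using card_sq_less_le[of "2 * m"] card_zones_across_le[of \<theta> "p + e * m"]
      card_long_inner_zones_le[OF ab m] unfolding J\<^sub>1_def J\<^sub>2_def J\<^sub>3_def by simp
qed

lemma abelian_power_exponent_le:
  assumes \<theta>: "0 \<le> \<theta>" and m: "16 \<le> m" and ab: "abelian_power_at (crit_word \<theta>) p m e"
  shows "real e \<le> \<theta> * real m + 80 * real m powr (3/4) + sqrt (2 * real m) + 5"
proof -
  define I where "I = {i. i < e \<and> (\<exists>j. in_zone \<theta> j (p + i * m) (p + i * m + m))}"
  define N where "N = {i. i < e \<and> \<not> (\<exists>j. in_zone \<theta> j (p + i * m) (p + i * m + m))}"
  have "{..<e} = I \<union> N" "I \<inter> N = {}" "finite I" "finite N" unfolding I_def N_def by auto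
  then have "e = card I + card N" by (metis card_Un_disjoint card_lessThan)
  moreover have "real (card I) \<le> \<theta> * real m + 80 * real m powr (3/4) + 2"
    unfolding I_def by (rule card_inner_blocks_le[OF \<theta> ab m])
  moreover have "real (card N) \<le> sqrt (2 * real m) + 3"
    using card_crossing_blocks_le[of m e \<theta> p] card_zone_starts_le[OF ab m] m unfolding N_def by simp
  ultimately show ?thesis by simp
qed


section \<open>The critical exponent\<close>

lemma crit_word_ratio_le:
  assumes k: "0 < k" and \<theta>: "0 \<le> \<theta>" and m: "16 \<le> m"
  shows "kab_A k (crit_word \<theta>) m / ereal (real m)
    \<le> ereal ((\<theta> * real m + 80 * real m powr (3/4) + sqrt (2 * real m) + 5) / real m)"
proof -
  have "kab_A k (crit_word \<theta>) m \<le> ereal (\<theta> * real m + 80 * real m powr (3/4) + sqrt (2 * real m) + 5)"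
    using abelian_power_exponent_le[OF \<theta> m] kab_power_at_imp_abelian_power_at[OF k] by (blast intro: kab_A_le)
  then have "kab_A k (crit_word \<theta>) m / ereal (real m)
      \<le> ereal (\<theta> * real m + 80 * real m powr (3/4) + sqrt (2 * real m) + 5) / ereal (real m)"
    using m by (intro ereal_divide_right_mono) auto
  then show ?thesis using m by simp
qed

lemma crit_word_ratio_ge:
  "ereal \<theta> \<le> kab_A k (crit_word \<theta>) (2 * zone_prime \<theta> j) / ereal (real (2 * zone_prime \<theta> j))"
proof -
  let ?L = "zone_prime \<theta> j"
  have "ereal (real (zone_exponent \<theta> ?L)) \<le> kab_A k (crit_word \<theta>) (2 * ?L)"
    by (rule kab_A_ge[OF zone_is_power])
  then have "ereal (real (zone_exponent \<theta> ?L)) / ereal (real (2 * ?L))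
      \<le> kab_A k (crit_word \<theta>) (2 * ?L) / ereal (real (2 * ?L))"
    using zone_prime_pos[of \<theta> j] by (intro ereal_divide_right_mono) auto
  moreover have "ereal (real (zone_exponent \<theta> ?L)) / ereal (real (2 * ?L))
      = ereal (real (zone_exponent \<theta> ?L) / real (2 * ?L))"
    using zone_prime_pos[of \<theta> j] by simp
  moreover have "\<theta> \<le> real (zone_exponent \<theta> ?L) / real (2 * ?L)"
    using zone_exponent_ge[of \<theta> ?L] zone_prime_pos[of \<theta> j] by (simp add: field_simps)
  ultimately show ?thesis by (metis ereal_less_eq(3) order_trans)
qed

theorem theorem2:
  fixes k :: nat and \<theta> :: real
  assumes "0 < k" and "0 \<le> \<theta>"
  shows "\<exists>w :: nat \<Rightarrow> nat. range w \<subseteq> {0, 1, 2} \<and> kab_crit_exp k w = ereal \<theta>"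
proof (intro exI conjI)
  show "range (crit_word \<theta>) \<subseteq> {0, 1, 2}" by (rule image_subsetI) (rule crit_word_range)
  show "kab_crit_exp k (crit_word \<theta>) = ereal \<theta>"
    unfolding kab_crit_exp_def
  proof (rule limsup_eq_ereal_if_bounds)
    show "\<forall>\<^sub>F m in sequentially. kab_A k (crit_word \<theta>) m / ereal (real m)
        \<le> ereal ((\<theta> * real m + 80 * real m powr (3/4) + sqrt (2 * real m) + 5) / real m)"
      using eventually_ge_at_top[of 16] by eventually_elim (rule crit_word_ratio_le[OF assms])
    show "(\<lambda>m. (\<theta> * real m + 80 * real m powr (3/4) + sqrt (2 * real m) + 5) / real m) \<longlonglongrightarrow> \<theta>"
      by real_asymp
    fix n
    have "n \<le> 2 * zone_prime \<theta> n" using zone_prime_ge[of n \<theta>] le_square[of n] by linarith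
    then show "\<exists>m\<ge>n. ereal \<theta> \<le> kab_A k (crit_word \<theta>) m / ereal (real m)"
      using crit_word_ratio_ge by blast
  qed
qed

end
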